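(* Let $s\ge1$ be a real number and let $X\subseteq Y\subseteq V$. If $X$ is $s$-sparse in $Y$, then $w(X)\le \frac{1}{s}\,w(Y)$.
   Context: Let $G$ be a finite graph with vertex set $V$, $|V|=n$, and $t=\chi_f(G)$. Fix a weight function $w:V\to\mathbb{R}_{\ge0}$ with $w(V)=t$ and $w(I)\le 1$ for every independent set $I$ of $G$, where $w(A)=\sum_{v\in A}w(v)$. List the vertices as $v_1,\dots,v_n$ so that $w(v_{i+1})\le w(v_i)$ for all $i$. Every subset $X\subseteq V$ is ordered according to this ordering of $V$, and $X_k$ denotes the set of the first $k$ elements of $X$; for real $s\ge1$, $X_s:=X_{\lfloor s\rfloor}$. For real $s\ge1$ and $Y\subseteq V$, a nonempty subset $X\subseteq Y$ is called $s$-principal in $Y$ if $X\subseteq Y_{s|X|}$ (i.e., all elements of $X$ are among the first $\lfloor s|X|\rfloor$ elements of $Y$). A subset $X\subseteq Y$ is called $s$-sparse in $Y$ if $X$ contains no subset that is $s$-principal in $Y$. *)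

theory Defs
  imports Complex_Main
begin

definition simple_graph :: "'a set \<Rightarrow> ('a \<Rightarrow> 'a \<Rightarrow> bool) \<Rightarrow> bool" where
  "simple_graph V E \<longleftrightarrow> finite V \<and> (\<forall>u v. E u v \<longrightarrow> u \<in> V \<and> v \<in> V)
     \<and> (\<forall>u v. E u v \<longrightarrow> E v u) \<and> (\<forall>v. \<not> E v v)"

definition independent :: "'a set \<Rightarrow> ('a \<Rightarrow> 'a \<Rightarrow> bool) \<Rightarrow> 'a set \<Rightarrow> bool" where
  "independent V E I \<longleftrightarrow> I \<subseteq> V \<and> (\<forall>u\<in>I. \<forall>v\<in>I. \<not> E u v)"

definition frac_chromatic :: "'a set \<Rightarrow> ('a \<Rightarrow> 'a \<Rightarrow> bool) \<Rightarrow> real" where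
  "frac_chromatic V E = Inf {(\<Sum>I\<in>{I. independent V E I}. f I) | f.
      (\<forall>I. 0 \<le> f I) \<and> (\<forall>v\<in>V. 1 \<le> (\<Sum>I\<in>{I. independent V E I \<and> v \<in> I}. f I))}"

text \<open>The fixed ordering of V is a list vs (v_1,...,v_n). A subset Y is ordered
  accordingly; prefix Y k is the set of its first k elements, and for real s,
  Y_s = Y_{floor s}.\<close>
definition prefix_set :: "'a list \<Rightarrow> 'a set \<Rightarrow> nat \<Rightarrow> 'a set" where
  "prefix_set vs Y k = set (take k (filter (\<lambda>v. v \<in> Y) vs))"

definition principal :: "'a list \<Rightarrow> real \<Rightarrow> 'a set \<Rightarrow> 'a set \<Rightarrow> bool" where
  "principal vs s Y X \<longleftrightarrow> X \<noteq> {} \<and> X \<subseteq> Y \<and>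
     X \<subseteq> prefix_set vs Y (nat \<lfloor>s * real (card X)\<rfloor>)"

definition sparse :: "'a list \<Rightarrow> real \<Rightarrow> 'a set \<Rightarrow> 'a set \<Rightarrow> bool" where
  "sparse vs s Y X \<longleftrightarrow> X \<subseteq> Y \<and> \<not> (\<exists>Z\<subseteq>X. principal vs s Y Z)"

end

theory Submission
  imports Defs
begin

text \<open>Sparsity of X in Y, applied to Z = X \<inter> Y_k, gives s |X \<inter> Y_k| \<le> k for every prefix Y_k.
  Both sides of s w(X) \<le> w(Y) are linear in w, and a nonincreasing nonnegative weight on Y
  is a nonnegative combination of indicator functions of prefixes Y_k; for the indicator of
  Y_k the inequality is exactly the prefix bound.\<close>

lemma prefix_set_mono:
  "k \<le> m \<Longrightarrow> prefix_set vs Y k \<subseteq> prefix_set vs Y m"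
  unfolding prefix_set_def by (rule set_take_subset_set_take)

lemma sparse_prefix_card_bound:
  assumes "sparse vs s Y X"
  shows "s * real (card (X \<inter> prefix_set vs Y k)) \<le> real k"
proof (cases "X \<inter> prefix_set vs Y k = {}")
  case False
  let ?Z = "X \<inter> prefix_set vs Y k"
  have "\<not> principal vs s Y ?Z"
    using assms unfolding sparse_def by blast
  then have "\<not> ?Z \<subseteq> prefix_set vs Y (nat \<lfloor>s * real (card ?Z)\<rfloor>)"
    using False assms unfolding principal_def sparse_def by blast
  then have "nat \<lfloor>s * real (card ?Z)\<rfloor> < k"
    using prefix_set_mono[of k "nat \<lfloor>s * real (card ?Z)\<rfloor>" vs Y]
    by (meson Int_lower2 leI order_trans)
  then show ?thesis by linarith
qed simp

lemma scaled_sum_le_sum_if_prefix_counts_bounded: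
  fixes f :: "'a \<Rightarrow> real" and s :: real
  assumes "distinct ys" and "\<forall>v\<in>set ys. 0 \<le> f v" and "sorted_wrt (\<lambda>x y. f y \<le> f x) ys"
    and "X \<subseteq> set ys" and "0 \<le> s"
    and "\<forall>k. s * real (card (X \<inter> set (take k ys))) \<le> real k"
  shows "s * sum f X \<le> sum f (set ys)"
  using assms
proof (induction ys arbitrary: f X rule: rev_induct)
  case Nil
  then show ?case by simp
next
  case (snoc y ys)
  define g where "g x = f x - f y" for x
  have "y \<notin> set ys" and "distinct ys"
    using snoc.prems(1) by auto
  have "finite X"
    using snoc.prems(4) finite_subset by blast
  have "f y \<ge> 0"
    using snoc.prems(2) by simp
  have "\<forall>v\<in>set ys. 0 \<le> g v" and "sorted_wrt (\<lambda>x y. g y \<le> g x) ys"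
    using snoc.prems(3) by (auto simp: g_def sorted_wrt_append)
  moreover have "X - {y} \<subseteq> set ys"
    using snoc.prems(4) by auto
  moreover have "\<forall>k. s * real (card ((X - {y}) \<inter> set (take k ys))) \<le> real k"
  proof
    fix k
    have "(X - {y}) \<inter> set (take k ys) \<subseteq> X \<inter> set (take k (ys @ [y]))"
      by auto
    then have "card ((X - {y}) \<inter> set (take k ys)) \<le> card (X \<inter> set (take k (ys @ [y])))"
      using \<open>finite X\<close> by (intro card_mono) auto
    then have "s * card ((X - {y}) \<inter> set (take k ys)) \<le> s * card (X \<inter> set (take k (ys @ [y])))"
      using snoc.prems(5) by (simp add: mult_left_mono)
    also have "\<dots> \<le> k"
      using snoc.prems(6) by blast
    finally show "s * real (card ((X - {y}) \<inter> set (take k ys))) \<le> real k" .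
  qed
  ultimately have IH: "s * sum g (X - {y}) \<le> sum g (set ys)"
    using snoc.IH[of g "X - {y}"] \<open>distinct ys\<close> snoc.prems(5) by blast
  have "s * real (card X) \<le> real (length ys + 1)"
    using snoc.prems(4) spec[OF snoc.prems(6), of "length ys + 1"] by (simp add: Int_absorb2)
  then have total: "s * (f y * card X) \<le> f y * (length ys + 1)"
    using mult_left_mono[OF _ \<open>f y \<ge> 0\<close>] by (metis mult.left_commute)
  have "sum f X = sum g X + f y * card X"
    by (simp add: g_def sum_subtractf)
  also have "sum g X = sum g (X - {y})"
    using \<open>finite X\<close> by (simp add: sum_diff1 g_def)
  finally have "sum f X = sum g (X - {y}) + f y * card X" .
  moreover have "sum f (set (ys @ [y])) = sum g (set ys) + f y * (length ys + 1)"
    using \<open>y \<notin> set ys\<close> distinct_card[OF \<open>distinct ys\<close>]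
    by (simp add: g_def sum_subtractf algebra_simps)
  ultimately show ?case
    using IH total by (simp add: algebra_simps)
qed

theorem lemma4:
  fixes V :: "'a set" and E :: "'a \<Rightarrow> 'a \<Rightarrow> bool" and w :: "'a \<Rightarrow> real"
    and vs :: "'a list" and s :: real and X Y :: "'a set"
  assumes G: "simple_graph V E"
    and w_nonneg: "\<forall>v\<in>V. 0 \<le> w v"
    and w_total: "(\<Sum>v\<in>V. w v) = frac_chromatic V E"
    and w_indep: "\<forall>I. independent V E I \<longrightarrow> (\<Sum>v\<in>I. w v) \<le> 1"
    and vs_enum: "distinct vs" "set vs = V"
    and vs_sorted: "\<forall>i. Suc i < length vs \<longrightarrow> w (vs ! Suc i) \<le> w (vs ! i)"
    and s: "1 \<le> s"
    and XY: "X \<subseteq> Y" "Y \<subseteq> V"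
    and sp: "sparse vs s Y X"
  shows "(\<Sum>v\<in>X. w v) \<le> (1 / s) * (\<Sum>v\<in>Y. w v)"
proof -
  define ys where "ys = filter (\<lambda>v. v \<in> Y) vs"
  have "set ys = Y" and "distinct ys"
    using XY vs_enum by (auto simp: ys_def)
  have "sorted_wrt (\<lambda>x y. w y \<le> w x) vs"
    using vs_sorted by (simp add: sorted_wrt_iff_nth_Suc_transp transp_def)
  then have "sorted_wrt (\<lambda>x y. w y \<le> w x) ys"
    unfolding ys_def by (rule sorted_wrt_filter)
  moreover have "\<forall>k. s * real (card (X \<inter> set (take k ys))) \<le> real k"
    using sparse_prefix_card_bound[OF sp] by (simp add: prefix_set_def ys_def)
  ultimately have "s * sum w X \<le> sum w Y"
    using scaled_sum_le_sum_if_prefix_counts_bounded[of ys w X s] \<open>set ys = Y\<close> \<open>distinct ys\<close>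
      w_nonneg XY s by auto
  then show ?thesis
    using s by (simp add: field_simps)
qed

end
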